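(* Let $\alpha \in [0,1)$ and $\mathbf{x} \in \Omega$ be such that $\mathcal{F}(\{\mathbf{x}\}, \alpha)$ is nonempty. Then the highest value $B(\mathbf{x})$ assigned to $\mathbf{x}$ by any valid bound $B$, denoted $B^*(\mathbf{x})$, satisfies $$B^*(\mathbf{x}) = \min\{E[F] : F \in \mathcal{F}(\{\mathbf{x}\}, \alpha)\}.$$
   Context: Fix integers $m \ge 2$, $n \ge 1$ and reals $S_{\min} < S_{\max}$; $S = \{S_0,\dots,S_{m-1}\}$ with $S_k = S_{\min} + k\frac{S_{\max}-S_{\min}}{m-1}$. $\mathcal{F}$ is the set of probability distributions on $S$, identified with the probability simplex in $\mathbb{R}^m$ with the Euclidean topology; $E[F]$ is the mean. $\Omega$ is the set of samples of size $n$ from $S$, identified with their sorted versions. For $F \in \mathcal{F}$, $\mathbf{X}$ denotes a sample of $n$ i.i.d. draws from $F$, and $P_F[\Omega']$ is the probability that (sorted) $\mathbf{X}$ lies in $\Omega' \subseteq \Omega$. $\mathcal{G}(\Omega',\alpha) = \{F : P_F[\Omega'] > \alpha\}$ and $\mathcal{F}(\Omega',\alpha)$ is its closure in $\mathcal{F}$. A bound is a function $B : \Omega \to \mathbb{R}$; it is valid (at level $1-\alpha$) if $P_F[B(\mathbf{X}) \le E[F]] \ge 1 - \alpha$ for every $F \in \mathcal{F}$. *)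

theory Defs
  imports "HOL-Analysis.Analysis"
begin

definition supp_pt :: "nat \<Rightarrow> real \<Rightarrow> real \<Rightarrow> nat \<Rightarrow> real" where
  "supp_pt m Smin Smax k = Smin + real k * (Smax - Smin) / (real m - 1)"

text \<open>Distributions on S: a distribution is given by its probability vector
  p 0, ..., p (m-1); coordinates k \<ge> m are fixed to 0 (so the set is a copy of
  the probability simplex in R^m, with the Euclidean = product topology).\<close>
definition dists :: "nat \<Rightarrow> (nat \<Rightarrow> real) set" where
  "dists m = {p. (\<forall>k. 0 \<le> p k) \<and> (\<forall>k\<ge>m. p k = 0) \<and> (\<Sum>k<m. p k) = 1}"

definition mean :: "nat \<Rightarrow> real \<Rightarrow> real \<Rightarrow> (nat \<Rightarrow> real) \<Rightarrow> real" where
  "mean m Smin Smax p = (\<Sum>k<m. p k * supp_pt m Smin Smax k)"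

text \<open>Samples of size n (identified with their sorted versions), encoded via
  the indices k of the support points S_k.\<close>
definition samples :: "nat \<Rightarrow> nat \<Rightarrow> nat list set" where
  "samples m n = {xs. length xs = n \<and> sorted xs \<and> set xs \<subseteq> {..<m}}"

text \<open>P_F[A]: probability that the sorted sample of n i.i.d. draws from p lies in A.\<close>
definition prob :: "nat \<Rightarrow> nat \<Rightarrow> (nat \<Rightarrow> real) \<Rightarrow> nat list set \<Rightarrow> real" where
  "prob m n p A = (\<Sum>w \<in> {w. length w = n \<and> set w \<subseteq> {..<m}}.
                      if sort w \<in> A then prod_list (map p w) else 0)"

definition Gset :: "nat \<Rightarrow> nat \<Rightarrow> nat list set \<Rightarrow> real \<Rightarrow> (nat \<Rightarrow> real) set" where
  "Gset m n A \<alpha> = {p \<in> dists m. prob m n p A > \<alpha>}"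

definition Fset :: "nat \<Rightarrow> nat \<Rightarrow> nat list set \<Rightarrow> real \<Rightarrow> (nat \<Rightarrow> real) set" where
  "Fset m n A \<alpha> = dists m \<inter> closure (Gset m n A \<alpha>)"

definition valid_bound :: "nat \<Rightarrow> nat \<Rightarrow> real \<Rightarrow> real \<Rightarrow> real \<Rightarrow> (nat list \<Rightarrow> real) \<Rightarrow> bool" where
  "valid_bound m n Smin Smax \<alpha> B =
     (\<forall>p \<in> dists m. prob m n p {w \<in> samples m n. B w \<le> mean m Smin Smax p} \<ge> 1 - \<alpha>)"

end

theory Submission
  imports Defs
begin

text \<open>
  A valid bound cannot exceed E[F] at x for any F under which x has probability more than
  \<alpha>: otherwise the event B(X) \<le> E[F] misses x and so has probability less than 1 - \<alpha>.
  Since B x \<le> E[F] is a closed condition on F, this extends to the closure F({x}, \<alpha>),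
  which is compact, so E attains its minimum there.  Conversely, the bound taking this
  minimum at x and S_min everywhere else is valid: S_min lies below every mean, and a
  distribution whose mean is below the minimum is outside G({x}, \<alpha>), so the only sample
  on which the bound fails has probability at most \<alpha>.
\<close>

lemma continuous_on_coordinate [continuous_intros]:
  "continuous_on S (\<lambda>x::'a \<Rightarrow> 'b::topological_space. x i)"
  by (rule continuous_on_product_then_coordinatewise[OF continuous_on_id])

lemma continuous_on_mean: "continuous_on S (mean m Smin Smax)"
  unfolding mean_def by (intro continuous_intros)

lemma closed_dists: "closed (dists m)"
proof -
  have "dists m = {p. \<forall>k. 0 \<le> p k} \<inter> {p. \<forall>k. m \<le> k \<longrightarrow> p k = 0} \<inter> {p. (\<Sum>k<m. p k) = 1}"
    unfolding dists_def by auto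
  moreover have "closed {p::nat \<Rightarrow> real. \<forall>k. 0 \<le> p k}"
    by (intro closed_Collect_all closed_Collect_le continuous_intros)
  moreover have "closed {p::nat \<Rightarrow> real. \<forall>k. m \<le> k \<longrightarrow> p k = 0}"
    by (intro closed_Collect_all closed_Collect_imp closed_Collect_eq continuous_intros) auto
  moreover have "closed {p::nat \<Rightarrow> real. (\<Sum>k<m. p k) = 1}"
    by (intro closed_Collect_eq continuous_intros)
  ultimately show ?thesis by auto
qed

lemma dists_subset_unit_cube: "dists m \<subseteq> (\<Pi>\<^sub>E k\<in>UNIV. {0..1})"
proof
  fix p assume p: "p \<in> dists m"
  have "p k \<le> 1" for k
  proof (cases "k < m")
    case True
    then have "p k \<le> (\<Sum>j<m. p j)"
      using p by (intro member_le_sum) (auto simp: dists_def)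
    with p show ?thesis by (simp add: dists_def)
  qed (use p in \<open>simp add: dists_def\<close>)
  with p show "p \<in> (\<Pi>\<^sub>E k\<in>UNIV. {0..1})" by (auto simp: dists_def)
qed

lemma compact_dists: "compact (dists m)"
proof -
  have "compactin (product_topology (\<lambda>_. euclidean) UNIV) (\<Pi>\<^sub>E k\<in>UNIV. {0..1::real})"
    by (subst compactin_PiE) auto
  then have "compact (\<Pi>\<^sub>E k\<in>UNIV. {0..1::real})"
    by (simp add: euclidean_product_topology compactin_euclidean_iff)
  then have "compact ((\<Pi>\<^sub>E k\<in>UNIV. {0..1}) \<inter> dists m)"
    by (rule compact_Int_closed[OF _ closed_dists])
  then show ?thesis
    using dists_subset_unit_cube by (simp add: Int_absorb1)
qed

lemma compact_Fset: "compact (Fset m n A \<alpha>)"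
  unfolding Fset_def by (rule compact_Int_closed[OF compact_dists closed_closure])

lemma Gset_subset_Fset: "Gset m n A \<alpha> \<subseteq> Fset m n A \<alpha>"
  using closure_subset[of "Gset m n A \<alpha>"] by (auto simp: Fset_def Gset_def)

lemma sum_prod_list_lists_length:
  fixes p :: "'a \<Rightarrow> 'b::comm_semiring_1"
  assumes "finite A"
  shows "(\<Sum>w\<in>{w. length w = n \<and> set w \<subseteq> A}. prod_list (map p w)) = (\<Sum>a\<in>A. p a) ^ n"
proof (induction n)
  case 0
  have "{w. length w = 0 \<and> set w \<subseteq> A} = {[]}" by auto
  then show ?case by simp
next
  case (Suc n)
  let ?W = "{w. length w = n \<and> set w \<subseteq> A}"
  have eq: "{w. length w = Suc n \<and> set w \<subseteq> A} = (\<lambda>(a, w). a # w) ` (A \<times> ?W)"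
    by (auto simp: length_Suc_conv image_def)
  have inj: "inj_on (\<lambda>(a, w). a # w) (A \<times> ?W)"
    by (auto simp: inj_on_def)
  have "(\<Sum>w\<in>{w. length w = Suc n \<and> set w \<subseteq> A}. prod_list (map p w))
      = (\<Sum>(a, w)\<in>A \<times> ?W. p a * prod_list (map p w))"
    unfolding eq by (subst sum.reindex[OF inj]) (auto intro!: sum.cong)
  also have "\<dots> = (\<Sum>a\<in>A. p a) * (\<Sum>w\<in>?W. prod_list (map p w))"
    by (simp add: sum_product sum.cartesian_product)
  also have "\<dots> = (\<Sum>a\<in>A. p a) ^ Suc n"
    using Suc by simp
  finally show ?case .
qed

lemma prod_list_map_nonneg: "p \<in> dists m \<Longrightarrow> 0 \<le> prod_list (map p w)"
  by (induction w) (auto simp: dists_def)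

lemma prob_compl:
  assumes "p \<in> dists m"
  shows "prob m n p A + prob m n p (samples m n - A) = 1"
proof -
  let ?W = "{w. length w = n \<and> set w \<subseteq> {..<m}}"
  have "prob m n p A + prob m n p (samples m n - A) = (\<Sum>w\<in>?W. prod_list (map p w))"
    unfolding prob_def sum.distrib[symmetric]
    by (rule sum.cong) (auto simp: samples_def)
  also have "\<dots> = 1"
    using assms by (simp add: sum_prod_list_lists_length dists_def)
  finally show ?thesis .
qed

lemma prob_mono:
  assumes "p \<in> dists m" and "A \<inter> samples m n \<subseteq> B"
  shows "prob m n p A \<le> prob m n p B"
  unfolding prob_def
proof (rule sum_mono)
  fix w assume "w \<in> {w. length w = n \<and> set w \<subseteq> {..<m}}"
  then have "sort w \<in> samples m n"
    by (simp add: samples_def)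
  then show "(if sort w \<in> A then prod_list (map p w) else 0)
      \<le> (if sort w \<in> B then prod_list (map p w) else 0)"
    using assms prod_list_map_nonneg by auto
qed

lemma prob_samples: "p \<in> dists m \<Longrightarrow> prob m n p (samples m n) = 1"
  using prob_compl[of p m n "{}"] by (simp add: prob_def)

lemma supp_pt_ge_Smin: "m \<ge> 2 \<Longrightarrow> Smin \<le> Smax \<Longrightarrow> Smin \<le> supp_pt m Smin Smax k"
  by (simp add: supp_pt_def)

lemma mean_ge_Smin:
  assumes "m \<ge> 2" and "Smin \<le> Smax" and "p \<in> dists m"
  shows "Smin \<le> mean m Smin Smax p"
proof -
  have "Smin = (\<Sum>k<m. p k * Smin)"
    using assms(3) by (simp add: dists_def flip: sum_distrib_right)
  also have "\<dots> \<le> mean m Smin Smax p"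
    unfolding mean_def using assms
    by (intro sum_mono mult_left_mono supp_pt_ge_Smin) (auto simp: dists_def)
  finally show ?thesis .
qed

lemma valid_bound_le_mean_Gset:
  assumes "valid_bound m n Smin Smax \<alpha> B" and "p \<in> Gset m n {x} \<alpha>"
  shows "B x \<le> mean m Smin Smax p"
proof (rule ccontr)
  let ?V = "{w \<in> samples m n. B w \<le> mean m Smin Smax p}"
  assume "\<not> B x \<le> mean m Smin Smax p"
  then have "{x} \<inter> samples m n \<subseteq> samples m n - ?V"
    by auto
  moreover have p: "p \<in> dists m" "\<alpha> < prob m n p {x}"
    using assms(2) by (simp_all add: Gset_def)
  ultimately have "prob m n p {x} \<le> prob m n p (samples m n - ?V)"
    by (intro prob_mono)
  moreover have "1 - \<alpha> \<le> prob m n p ?V"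
    using assms(1) p(1) by (simp add: valid_bound_def)
  ultimately show False
    using p(2) prob_compl[OF p(1), of n ?V] by simp
qed

lemma valid_bound_le_mean_Fset:
  assumes "valid_bound m n Smin Smax \<alpha> B" and "p \<in> Fset m n {x} \<alpha>"
  shows "B x \<le> mean m Smin Smax p"
proof -
  have "closure (Gset m n {x} \<alpha>) \<subseteq> {p. B x \<le> mean m Smin Smax p}"
    using valid_bound_le_mean_Gset[OF assms(1)]
    by (intro closure_minimal closed_Collect_le continuous_intros continuous_on_mean) auto
  with assms(2) show ?thesis
    by (auto simp: Fset_def)
qed

lemma valid_bound_at_point:
  assumes "m \<ge> 2" and "Smin \<le> Smax" and "0 \<le> \<alpha>"
    and c_le: "\<And>p. p \<in> Gset m n {x} \<alpha> \<Longrightarrow> c \<le> mean m Smin Smax p"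
  shows "valid_bound m n Smin Smax \<alpha> (\<lambda>w. if w = x then c else Smin)"
  unfolding valid_bound_def
proof
  fix p assume p: "p \<in> dists m"
  let ?V = "{w \<in> samples m n. (if w = x then c else Smin) \<le> mean m Smin Smax p}"
  have compl_V: "samples m n - ?V \<subseteq> {x}"
    using mean_ge_Smin[OF assms(1,2) p] by auto
  show "1 - \<alpha> \<le> prob m n p ?V"
  proof (cases "c \<le> mean m Smin Smax p")
    case True
    then have "samples m n \<subseteq> ?V"
      using compl_V by auto
    then show ?thesis
      using prob_mono[OF p, of "samples m n" n ?V] prob_samples[OF p] assms(3) by simp
  next
    case False
    then have "p \<notin> Gset m n {x} \<alpha>"
      using c_le by blast
    then have "prob m n p {x} \<le> \<alpha>"
      using p by (simp add: Gset_def)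
    moreover have "prob m n p (samples m n - ?V) \<le> prob m n p {x}"
      using compl_V by (intro prob_mono[OF p]) auto
    ultimately show ?thesis
      using prob_compl[OF p, of n ?V] by simp
  qed
qed

theorem lemma6:
  fixes m n :: nat and Smin Smax \<alpha> :: real and x :: "nat list"
  assumes "m \<ge> 2" and "n \<ge> 1" and "Smin < Smax"
    and "0 \<le> \<alpha>" and "\<alpha> < 1"
    and "x \<in> samples m n"
    and "Fset m n {x} \<alpha> \<noteq> {}"
  shows "\<exists>F0 \<in> Fset m n {x} \<alpha>.
           (\<forall>F \<in> Fset m n {x} \<alpha>. mean m Smin Smax F0 \<le> mean m Smin Smax F) \<and>
           (\<exists>B. valid_bound m n Smin Smax \<alpha> B \<and> B x = mean m Smin Smax F0) \<and>
           (\<forall>B. valid_bound m n Smin Smax \<alpha> B \<longrightarrow> B x \<le> mean m Smin Smax F0)"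
proof -
  obtain F0 where F0: "F0 \<in> Fset m n {x} \<alpha>"
    and min: "\<forall>F \<in> Fset m n {x} \<alpha>. mean m Smin Smax F0 \<le> mean m Smin Smax F"
    using continuous_attains_inf[OF compact_Fset assms(7) continuous_on_mean] by blast
  let ?B = "\<lambda>w. if w = x then mean m Smin Smax F0 else Smin"
  have "valid_bound m n Smin Smax \<alpha> ?B"
    using assms(1,3,4) min Gset_subset_Fset[of m n "{x}" \<alpha>] by (intro valid_bound_at_point) auto
  then have "\<exists>B. valid_bound m n Smin Smax \<alpha> B \<and> B x = mean m Smin Smax F0"
    by auto
  moreover have "\<forall>B. valid_bound m n Smin Smax \<alpha> B \<longrightarrow> B x \<le> mean m Smin Smax F0"
    using valid_bound_le_mean_Fset F0 by blast
  ultimately show ?thesis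
    using F0 min by blast
qed

end
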